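(* For all pure terms $t,t'$: $t\equiv t'$ if and only if $t=t'$ (syntactic equality up to $\alpha$-conversion).
   Context: Pure terms are those of the calculus with pure values $v::=x\mid\lambda x.\vec{s}\mid *\mid (v_1,v_2)\mid \mathtt{inl}(v)\mid\mathtt{inr}(v)$ and pure terms $s,t::=v\mid s\,t\mid t;\vec{s}\mid \mathtt{let}\,(x_1,x_2)=t\,\mathtt{in}\,\vec{s}\mid \mathtt{match}\,t\,\{\mathtt{inl}\,x_1\mapsto\vec{s}_1\mid\mathtt{inr}\,x_2\mapsto\vec{s}_2\}$, considered up to $\alpha$-conversion. Term distributions are formal expressions $\vec{t}::=\vec{0}\mid t\mid \vec{s}+\vec{t}\mid\alpha\cdot\vec{t}$ ($\alpha\in\mathbb{C}$). $\equiv$ is the congruence on term distributions (going only through $+$ and $\cdot$, never inside pure terms) generated by: $\vec t+\vec0\equiv\vec t$; $1\cdot\vec t\equiv\vec t$; $\alpha\cdot(\beta\cdot\vec t)\equiv\alpha\beta\cdot\vec t$; commutativity and associativity of $+$; $(\alpha+\beta)\cdot\vec t\equiv\alpha\cdot\vec t+\beta\cdot\vec t$; $\alpha\cdot(\vec t_1+\vec t_2)\equiv\alpha\cdot\vec t_1+\alpha\cdot\vec t_2$. *)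

theory Defs
  imports Complex_Main
begin

text \<open>Pure values, pure terms and term distributions, with bound variables
represented by de Bruijn indices, so that HOL equality on these datatypes is
syntactic equality up to alpha-conversion.
 - PLam d : lambda x. d (binds one variable, index 0 in d)
 - PLet t d : let (x1,x2) = t in d (binds two variables in d: x1 is index 1, x2 is index 0)
 - PMatch t d1 d2 : match t {inl x1 -> d1 | inr x2 -> d2} (each branch binds one variable)\<close>

datatype pval =
    PVar nat
  | PLam dist
  | PStar
  | PPair pval pval
  | PInl pval
  | PInr pval
and pterm =
    PV pval
  | PApp pterm pterm
  | PSeq pterm dist
  | PLet pterm dist
  | PMatch pterm dist dist
and dist =
    DZero
  | DTerm pterm
  | DPlus dist dist
  | DScale complex dist

inductive dequiv :: "dist \<Rightarrow> dist \<Rightarrow> bool" (infix "\<equiv>\<^sub>d" 50) where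
  drefl: "s \<equiv>\<^sub>d s"
| dsym: "s \<equiv>\<^sub>d t \<Longrightarrow> t \<equiv>\<^sub>d s"
| dtrans: "s \<equiv>\<^sub>d t \<Longrightarrow> t \<equiv>\<^sub>d u \<Longrightarrow> s \<equiv>\<^sub>d u"
| dcong_plus: "s1 \<equiv>\<^sub>d t1 \<Longrightarrow> s2 \<equiv>\<^sub>d t2 \<Longrightarrow> DPlus s1 s2 \<equiv>\<^sub>d DPlus t1 t2"
| dcong_scale: "s \<equiv>\<^sub>d t \<Longrightarrow> DScale \<alpha> s \<equiv>\<^sub>d DScale \<alpha> t"
| dplus_zero: "DPlus t DZero \<equiv>\<^sub>d t"
| done_scale: "DScale 1 t \<equiv>\<^sub>d t"
| dscale_scale: "DScale \<alpha> (DScale \<beta> t) \<equiv>\<^sub>d DScale (\<alpha> * \<beta>) t"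
| dplus_comm: "DPlus s t \<equiv>\<^sub>d DPlus t s"
| dplus_assoc: "DPlus (DPlus s t) u \<equiv>\<^sub>d DPlus s (DPlus t u)"
| dscale_add: "DScale (\<alpha> + \<beta>) t \<equiv>\<^sub>d DPlus (DScale \<alpha> t) (DScale \<beta> t)"
| dscale_distrib: "DScale \<alpha> (DPlus t1 t2) \<equiv>\<^sub>d DPlus (DScale \<alpha> t1) (DScale \<alpha> t2)"

end

theory Submission
  imports Defs
begin

text \<open>Every distribution denotes a finitely supported function from pure terms to
complex numbers, its coefficient function, and each generating axiom of the
congruence is an identity of such functions. Congruent distributions therefore
have equal coefficients, and the coefficient of t in the distribution t is 1
while that of any other term is 0.\<close>

primrec coeff :: "dist \<Rightarrow> pterm \<Rightarrow> complex" where
  "coeff DZero = (\<lambda>u. 0)"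
| "coeff (DTerm t) = (\<lambda>u. if u = t then 1 else 0)"
| "coeff (DPlus s t) = (\<lambda>u. coeff s u + coeff t u)"
| "coeff (DScale \<alpha> t) = (\<lambda>u. \<alpha> * coeff t u)"

lemma coeff_dequiv: "s \<equiv>\<^sub>d t \<Longrightarrow> coeff s = coeff t"
  by (induction rule: dequiv.induct) (auto simp: algebra_simps)

lemma coeff_DTerm_eq_iff: "coeff (DTerm t) = coeff (DTerm t') \<longleftrightarrow> t = t'"
  by (metis coeff.simps(2) zero_neq_one)

theorem corollary1:
  fixes t t' :: pterm
  shows "DTerm t \<equiv>\<^sub>d DTerm t' \<longleftrightarrow> t = t'"
proof
  assume "DTerm t \<equiv>\<^sub>d DTerm t'"
  then show "t = t'" using coeff_dequiv coeff_DTerm_eq_iff by blast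
next
  assume "t = t'"
  then show "DTerm t \<equiv>\<^sub>d DTerm t'" by (simp add: drefl)
qed

end
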